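(* Let $D \ge 1$, $x \in [0,1]^D$, and $s_d = 2^d$ for $d = 0, \ldots, D-1$. Consider the following procedure: initialize the lists $\mathtt{indices} = [0]$ and $\mathtt{weights} = [1]$; for $d = 0$ to $D-1$, and for each $k = 0$ to $2^d - 1$ (in this order): append $s_d + \mathtt{indices}[k]$ to $\mathtt{indices}$, append $x[d]\cdot \mathtt{weights}[k]$ to $\mathtt{weights}$, and then replace $\mathtt{weights}[k]$ by $(1 - x[d])\cdot \mathtt{weights}[k]$; finally return $\mathtt{indices}$ and $\mathtt{weights}$. Then the returned lists each have length $2^D$ and, for every $k = 0, 1, \ldots, 2^D - 1$ (lists indexed from $0$), $$\mathtt{indices}[k] = \sum_{d=0}^{D-1} \mathrm{bit}_d(k)\, s_d, \qquad \mathtt{weights}[k] = \prod_{d=0}^{D-1}\Big( (1 - \mathrm{bit}_d(k))(1 - x[d]) + \mathrm{bit}_d(k)\, x[d] \Big),$$ where $\mathrm{bit}_d(k) \in \{0,1\}$ is the $d$th bit of the binary expansion of $k$. That is, the procedure returns the indices of the $2^D$ vertices of the unit cell $[0,1]^D$ (vertex $v \in \{0,1\}^D$ indexed by $\sum_d v[d] 2^d$) together with their multilinear interpolation weights at $x$.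
   Context: $x[d]$ denotes the $d$th coordinate of $x$ (coordinates indexed $0,\ldots,D-1$). The lattice parameters of a $2^D$ lattice are indexed so that the vertex $v\in\{0,1\}^D$ has index $\sum_d v[d]2^d$; thus $s_d = 2^d$ is the difference of indices of two vertices adjacent in the $d$th dimension. The multilinear interpolation weight of vertex $v$ at $x$ is $\prod_d x[d]^{v[d]}(1-x[d])^{1-v[d]}$. Lists are appended to at the end, and the index $k$ in the inner loop refers to positions $0,\ldots,2^d-1$ of the lists as they stand. *)

theory Defs
  imports Complex_Main
begin

definition inner_step :: "(nat \<Rightarrow> real) \<Rightarrow> nat \<Rightarrow> nat \<Rightarrow> nat list \<times> real list \<Rightarrow> nat list \<times> real list" where
  "inner_step x d k st =
     (let ind = fst st; w = snd st;
          ind' = ind @ [2 ^ d + ind ! k];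
          w' = w @ [x d * w ! k];
          w'' = w'[k := (1 - x d) * w' ! k]
      in (ind', w''))"

definition outer_step :: "(nat \<Rightarrow> real) \<Rightarrow> nat \<Rightarrow> nat list \<times> real list \<Rightarrow> nat list \<times> real list" where
  "outer_step x d st = fold (inner_step x d) [0..<2 ^ d] st"

definition cell_vertices :: "nat \<Rightarrow> (nat \<Rightarrow> real) \<Rightarrow> nat list \<times> real list" where
  "cell_vertices D x = fold (outer_step x) [0..<D] ([0], [1])"

definition bit_d :: "nat \<Rightarrow> nat \<Rightarrow> nat" where
  "bit_d d k = (k div 2 ^ d) mod 2"

end

theory Submission
  imports Defs
begin

text \<open>Pass \<open>d\<close> of the procedure maps the lists for the cell \<open>[0,1]\<^sup>d\<close> to their concatenation
  with a shifted copy: the old vertices become those with bit \<open>d\<close> equal to \<open>0\<close> (weight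
  scaled by \<open>1 - x d\<close>), the appended ones those with bit \<open>d\<close> equal to \<open>1\<close> (index shifted
  by \<open>2\<^sup>d\<close>, weight scaled by \<open>x d\<close>).\<close>

lemma fold_inner_step:
  assumes "j \<le> length W" "length I = length W"
  shows "fold (inner_step x d) [0..<j] (I, W) =
    (I @ map (\<lambda>i. 2 ^ d + I ! i) [0..<j],
     map (\<lambda>i. (1 - x d) * W ! i) [0..<j] @ drop j W @ map (\<lambda>i. x d * W ! i) [0..<j])"
  using assms
proof (induction j)
  case 0
  then show ?case by simp
next
  case (Suc j)
  then have j: "j < length W" "j < Suc (j + length W - 1)" by simp_all
  have drop_j: "drop j W = W ! j # drop (Suc j) W"
    using j by (simp add: Cons_nth_drop_Suc)
  have "fold (inner_step x d) [0..<Suc j] (I, W) =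
      inner_step x d j (I @ map (\<lambda>i. 2 ^ d + I ! i) [0..<j],
        map (\<lambda>i. (1 - x d) * W ! i) [0..<j] @ drop j W @ map (\<lambda>i. x d * W ! i) [0..<j])"
    using Suc by simp
  also have "\<dots> = (I @ map (\<lambda>i. 2 ^ d + I ! i) [0..<Suc j],
      map (\<lambda>i. (1 - x d) * W ! i) [0..<Suc j] @ drop (Suc j) W
        @ map (\<lambda>i. x d * W ! i) [0..<Suc j])"
    using j Suc by (simp add: inner_step_def Let_def drop_j nth_append list_update_append)
  finally show ?case .
qed

lemma outer_step_eq:
  assumes "length I = 2 ^ d" "length W = 2 ^ d"
  shows "outer_step x d (I, W) =
    (I @ map (\<lambda>i. 2 ^ d + I ! i) [0..<2 ^ d],
     map (\<lambda>i. (1 - x d) * W ! i) [0..<2 ^ d] @ map (\<lambda>i. x d * W ! i) [0..<2 ^ d])"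
  using fold_inner_step[of "2 ^ d" W I x d] assms by (simp add: outer_step_def)

lemma cell_vertices_0: "cell_vertices 0 x = ([0], [1])"
  by (simp add: cell_vertices_def)

lemma cell_vertices_Suc: "cell_vertices (Suc D) x = outer_step x D (cell_vertices D x)"
  by (simp add: cell_vertices_def)

lemma bit_d_less_power: "k < 2 ^ d \<Longrightarrow> bit_d d k = 0"
  by (simp add: bit_d_def)

lemma bit_d_power_add_self: "i < 2 ^ d \<Longrightarrow> bit_d d (2 ^ d + i) = 1"
  by (simp add: bit_d_def)

lemma bit_d_power_add:
  assumes "d < D"
  shows "bit_d d (2 ^ D + i) = bit_d d i"
proof -
  obtain e where D: "D = Suc (d + e)"
    using assms less_imp_Suc_add by blast
  have "(2 ^ D + i) div 2 ^ d = 2 * 2 ^ e + i div 2 ^ d"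
    using div_mult_self4[of "2 ^ d" "2 * 2 ^ e" i] by (simp add: D power_add mult.left_commute)
  then show ?thesis
    unfolding bit_d_def by simp
qed

definition vertex_index :: "nat \<Rightarrow> nat \<Rightarrow> nat" where
  "vertex_index D k = (\<Sum>d<D. bit_d d k * 2 ^ d)"

definition vertex_weight :: "nat \<Rightarrow> (nat \<Rightarrow> real) \<Rightarrow> nat \<Rightarrow> real" where
  "vertex_weight D x k =
     (\<Prod>d<D. (1 - real (bit_d d k)) * (1 - x d) + real (bit_d d k) * x d)"

lemma vertex_index_Suc_low: "k < 2 ^ D \<Longrightarrow> vertex_index (Suc D) k = vertex_index D k"
  by (simp add: vertex_index_def bit_d_less_power)

lemma vertex_index_Suc_high:
  "i < 2 ^ D \<Longrightarrow> vertex_index (Suc D) (2 ^ D + i) = 2 ^ D + vertex_index D i"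
  by (simp add: vertex_index_def bit_d_power_add_self bit_d_power_add)

lemma vertex_weight_Suc_low:
  "k < 2 ^ D \<Longrightarrow> vertex_weight (Suc D) x k = (1 - x D) * vertex_weight D x k"
  by (simp add: vertex_weight_def bit_d_less_power)

lemma vertex_weight_Suc_high:
  "i < 2 ^ D \<Longrightarrow> vertex_weight (Suc D) x (2 ^ D + i) = x D * vertex_weight D x i"
  by (simp add: vertex_weight_def bit_d_power_add_self bit_d_power_add)

lemma upt_double_power:
  "[0..<2 * 2 ^ D] = [0..<2 ^ D] @ map (\<lambda>i. 2 ^ D + i) [0..<2 ^ D]"
  using upt_add_eq_append[of 0 "2 ^ D" "2 ^ D"] map_add_upt[of "2 ^ D" "2 ^ D"]
  by (simp add: mult_2 add.commute)

lemma cell_vertices_eq: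
  "cell_vertices D x =
     (map (vertex_index D) [0..<2 ^ D], map (vertex_weight D x) [0..<2 ^ D])"
proof (induction D)
  case 0
  then show ?case
    by (simp add: cell_vertices_0 vertex_index_def vertex_weight_def)
next
  case (Suc D)
  show ?case
    unfolding cell_vertices_Suc Suc.IH
    by (simp add: outer_step_eq upt_double_power vertex_index_Suc_low vertex_index_Suc_high
        vertex_weight_Suc_low vertex_weight_Suc_high cong: map_cong)
qed

theorem lemma2:
  fixes D :: nat and x :: "nat \<Rightarrow> real"
  assumes "D \<ge> 1"
    and "\<And>d. d < D \<Longrightarrow> 0 \<le> x d \<and> x d \<le> 1"
  shows "length (fst (cell_vertices D x)) = 2 ^ D
       \<and> length (snd (cell_vertices D x)) = 2 ^ D
       \<and> (\<forall>k < 2 ^ D.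
            fst (cell_vertices D x) ! k = (\<Sum>d<D. bit_d d k * 2 ^ d)
          \<and> snd (cell_vertices D x) ! k =
              (\<Prod>d<D. (1 - real (bit_d d k)) * (1 - x d) + real (bit_d d k) * x d))"
  by (simp add: cell_vertices_eq vertex_index_def vertex_weight_def)

end
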